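(* Let $n,x$ be integers with $1<x<n$, so that $G=C_{2n}(x,1,n)$ is a $5$-regular circulant graph. If $n\equiv 0 \pmod 3$, $x\equiv 1\pmod 3$ and $x<\tfrac{n}{2}$, then $G$ is word-representable.
   Context: Two distinct letters $x,y$ alternate in a word $w$ if, after deleting all other letters from $w$, the resulting word is of the form $xyxy\cdots$ or $yxyx\cdots$ (of even or odd length). A graph $G=(V,E)$ is word-representable if there is a word $w$ over the alphabet $V$, containing every letter of $V$ at least once, such that for all distinct $x,y\in V$, $xy\in E$ if and only if $x$ and $y$ alternate in $w$. For an integer $m$ and a set $R$ of positive integers each at most $m/2$, the circulant graph $C_m(R)$ has vertex set $\{0,1,\dots,m-1\}$, with $i$ and $j$ adjacent iff $\min(|i-j|,\,m-|i-j|)\in R$. $C_{2n}(x,1,n)$ denotes the circulant graph on $2n$ vertices with jump set $\{1,x,n\}$; it is $5$-regular exactly when $1<x<n$. *)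

theory Defs
  imports Main
begin

definition alternate_in :: "'a list \<Rightarrow> 'a \<Rightarrow> 'a \<Rightarrow> bool" where
  "alternate_in w x y \<longleftrightarrow>
     (let u = filter (\<lambda>z. z = x \<or> z = y) w in
        \<forall>i. Suc i < length u \<longrightarrow> u ! i \<noteq> u ! Suc i)"

definition word_representable :: "'a set \<Rightarrow> ('a \<Rightarrow> 'a \<Rightarrow> bool) \<Rightarrow> bool" where
  "word_representable V E \<longleftrightarrow>
     (\<exists>w. set w = V \<and>
          (\<forall>x\<in>V. \<forall>y\<in>V. x \<noteq> y \<longrightarrow> (E x y \<longleftrightarrow> alternate_in w x y)))"

definition circulant_vertices :: "nat \<Rightarrow> nat set" where
  "circulant_vertices m = {0..<m}"

definition circulant_adj :: "nat \<Rightarrow> nat set \<Rightarrow> nat \<Rightarrow> nat \<Rightarrow> bool" where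
  "circulant_adj m R i j \<longleftrightarrow>
     i < m \<and> j < m \<and>
     (let d = (if i \<le> j then j - i else i - j) in min d (m - d) \<in> R)"

end

theory Submission
  imports Defs
begin

(*
  A graph with a proper 3-colouring is word-representable. List the vertices colour class by
  colour class; then, for every non-edge {a, b}, append a block in which every edge {u, v} with
  col u < col v reads u v u v again, while a and b read a b b a (or a a b b), which destroys
  their alternation.

  For n = 3t the circulant graph C_2n(x, 1, n) is properly 3-coloured by
  i |-> (i + i div 2t) mod 3: a jump by d changes the colour by d + d div 2t + c with a carry
  c in {0, 1}, and under the hypotheses on n and x every jump d in {1, x, n, 2n - 1, 2n - x}
  satisfies d + d div 2t = 1 (mod 3).
*)

lemma alternate_in_iff_distinct_adj:
  "alternate_in w x y \<longleftrightarrow> distinct_adj (filter (\<lambda>z. z = x \<or> z = y) w)"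
  unfolding alternate_in_def Let_def distinct_adj_conv_nth ..

lemma alternate_in_commute: "alternate_in w x y \<longleftrightarrow> alternate_in w y x"
  unfolding alternate_in_iff_distinct_adj by (simp add: disj_commute)

lemma distinct_adj_pair_blocks:
  "u \<noteq> v \<Longrightarrow> distinct_adj ([u, v] @ concat (map (\<lambda>_. [u, v, u, v]) xs))"
proof (induction xs)
  case (Cons a xs)
  have "[u, v] @ concat (map (\<lambda>_. [u, v, u, v]) (a # xs))
      = [u, v, u, v] @ ([u, v] @ concat (map (\<lambda>_. [u, v, u, v]) xs))"
    by simp
  with Cons show ?case by (simp only: distinct_adj_append_iff) simp
qed simp

lemma filter_pair_sorted:
  fixes xs :: "'a::linorder list"
  assumes "sorted_wrt (<) xs" and "u < v"
  shows "filter (\<lambda>z. z = u \<or> z = v) xs = filter (\<lambda>z. z \<in> set xs) [u, v]"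
  using assms by (induction xs) auto

definition colour_class :: "('a \<Rightarrow> nat) \<Rightarrow> 'a list \<Rightarrow> nat \<Rightarrow> 'a list" where
  "colour_class col vs k = filter (\<lambda>z. col z = k) vs"

definition colour_sorted :: "('a \<Rightarrow> nat) \<Rightarrow> 'a list \<Rightarrow> 'a list" where
  "colour_sorted col vs = colour_class col vs 0 @ colour_class col vs 1 @ colour_class col vs 2"

definition colour_lex :: "('a::linorder \<Rightarrow> nat) \<Rightarrow> 'a \<Rightarrow> 'a \<Rightarrow> bool" where
  "colour_lex col u v \<longleftrightarrow> col u < col v \<or> col u = col v \<and> u < v"

lemma filter_colour_class:
  assumes "sorted_wrt (<) vs" and "colour_lex col u v"
  shows "filter (\<lambda>z. z = u \<or> z = v) (colour_class col vs k)
    = filter (\<lambda>z. z \<in> set vs \<and> col z = k) [u, v]"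
proof (cases "u < v")
  case True
  then show ?thesis
    unfolding colour_class_def using filter_pair_sorted[OF sorted_wrt_filter[OF assms(1)] True] by simp
next
  case False
  have "col u \<noteq> col v" using False assms(2) unfolding colour_lex_def by auto
  with False have "v < u" by (metis linorder_neqE)
  then show ?thesis
    unfolding colour_class_def disj_commute[of "_ = u"]
    using filter_pair_sorted[OF sorted_wrt_filter[OF assms(1)] \<open>v < u\<close>] \<open>col u \<noteq> col v\<close>
    by auto
qed

lemma filter_colour_sorted:
  assumes "sorted_wrt (<) vs" and "u \<in> set vs" "v \<in> set vs" "colour_lex col u v" "col v < 3"
  shows "filter (\<lambda>z. z = u \<or> z = v) (colour_sorted col vs) = [u, v]"
  using assms(2-) unfolding colour_sorted_def filter_append filter_colour_class[OF assms(1,4)] colour_lex_def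
  by auto

(* Placing b a in front of the colour class of b serves every edge at a or b unless
   col a = 0 and col b = 2; in that case a and b are instead placed around two copies of the
   remaining vertices. *)
definition nonedge_block :: "('a \<Rightarrow> nat) \<Rightarrow> 'a list \<Rightarrow> 'a \<Rightarrow> 'a \<Rightarrow> 'a list" where
  "nonedge_block col vs a b =
     (let rest = filter (\<lambda>z. z \<noteq> a \<and> z \<noteq> b) vs in
      if col a = 0 \<and> col b = 2
      then [a] @ colour_sorted col rest @ [a, b] @ colour_sorted col rest @ [b]
      else colour_sorted col vs @
        concat (map (\<lambda>k. (if k = col b then [b, a] else []) @ colour_class col rest k) [0, 1, 2]))"

lemma nonedge_block_edge:
  assumes "sorted_wrt (<) vs" and "u \<in> set vs" "v \<in> set vs" "col u < col v" "col v < 3"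
    and "colour_lex col a b" "col b < 3" and "\<not> (a = u \<and> b = v)" "\<not> (a = v \<and> b = u)"
  shows "filter (\<lambda>z. z = u \<or> z = v) (nonedge_block col vs a b) = [u, v, u, v]"
proof -
  define rest where "rest = filter (\<lambda>z. z \<noteq> a \<and> z \<noteq> b) vs"
  have uv: "colour_lex col u v" using assms(4) unfolding colour_lex_def by simp
  have rest_class: "filter (\<lambda>z. z = u \<or> z = v) (colour_class col rest k)
      = filter (\<lambda>z. z \<noteq> a \<and> z \<noteq> b \<and> col z = k) [u, v]" for k
    using filter_colour_class[OF sorted_wrt_filter[OF assms(1)] uv] assms(2,3)
    unfolding rest_def by auto
  have "col a \<le> col b" "a \<noteq> b" using assms(6) unfolding colour_lex_def by auto
  show ?thesis
  proof (cases "col a = 0 \<and> col b = 2")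
    case True
    have "filter (\<lambda>z. z = u \<or> z = v) (colour_sorted col rest)
        = filter (\<lambda>z. z \<noteq> a \<and> z \<noteq> b) [u, v]"
      using assms(4,5) unfolding colour_sorted_def filter_append rest_class by auto
    with True assms(4,5,8,9) show ?thesis
      unfolding nonedge_block_def Let_def rest_def[symmetric] by auto
  next
    case False
    have block: "nonedge_block col vs a b = colour_sorted col vs @
        concat (map (\<lambda>k. (if k = col b then [b, a] else []) @ colour_class col rest k) [0, 1, 2])"
      unfolding nonedge_block_def Let_def rest_def[symmetric] if_not_P[OF False] by (rule refl)
    from False \<open>col a \<le> col b\<close> assms(7) have "col b \<le> col a + 1" by linarith
    have "filter (\<lambda>z. z = u \<or> z = v)
        (concat (map (\<lambda>k. (if k = col b then [b, a] else []) @ colour_class col rest k) [0, 1, 2]))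
      = concat (map (\<lambda>k. filter (\<lambda>z. z = u \<or> z = v) (if k = col b then [b, a] else [])
          @ filter (\<lambda>z. z \<noteq> a \<and> z \<noteq> b \<and> col z = k) [u, v]) [0, 1, 2])"
      by (simp only: filter_concat map_map comp_def filter_append rest_class)
    also have "\<dots> = [u, v]"
      using assms(4,5,7,8,9) \<open>a \<noteq> b\<close> \<open>col a \<le> col b\<close> \<open>col b \<le> col a + 1\<close>
      by (cases "u = a"; cases "u = b"; cases "v = a"; cases "v = b") auto
    finally show ?thesis
      unfolding block filter_append filter_colour_sorted[OF assms(1-3) uv assms(5)] by simp
  qed
qed

lemma nonedge_block_not_alternating:
  assumes "sorted_wrt (<) vs" and "a \<in> set vs" "b \<in> set vs" "colour_lex col a b" "col b < 3"
  shows "\<not> distinct_adj (filter (\<lambda>z. z = a \<or> z = b) (nonedge_block col vs a b))"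
proof -
  define rest where "rest = filter (\<lambda>z. z \<noteq> a \<and> z \<noteq> b) vs"
  have rest_class: "filter (\<lambda>z. z = a \<or> z = b) (colour_class col rest k) = []" for k
    unfolding rest_def colour_class_def by (auto simp: filter_empty_conv)
  then have "filter (\<lambda>z. z = a \<or> z = b) (colour_sorted col rest) = []"
    unfolding colour_sorted_def by simp
  moreover have "a \<noteq> b" using assms(4) unfolding colour_lex_def by auto
  ultimately show ?thesis
    using assms(5) unfolding nonedge_block_def Let_def rest_def[symmetric]
    by (simp add: filter_colour_sorted[OF assms] rest_class)
qed

definition three_colour_word ::
    "('a::linorder \<Rightarrow> nat) \<Rightarrow> ('a \<Rightarrow> 'a \<Rightarrow> bool) \<Rightarrow> 'a list \<Rightarrow> 'a list" where
  "three_colour_word col E vs =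
     colour_sorted col vs @
     concat (map (\<lambda>(a, b). nonedge_block col vs a b)
       [(a, b) \<leftarrow> List.product vs vs. \<not> E a b \<and> colour_lex col a b])"

lemma set_three_colour_word:
  assumes "\<And>v. v \<in> set vs \<Longrightarrow> col v < 3"
  shows "set (three_colour_word col E vs) = set vs"
proof -
  have "set (colour_sorted col vs) = {z \<in> set vs. col z < 3}"
    unfolding colour_sorted_def colour_class_def by auto
  then have "set (colour_sorted col vs) = set vs"
    using assms by auto
  moreover have "set (nonedge_block col vs a b) \<subseteq> set vs \<union> {a, b}" for a b
    unfolding nonedge_block_def Let_def colour_sorted_def colour_class_def by auto
  ultimately show ?thesis
    unfolding three_colour_word_def by fastforce
qed

lemma alternate_in_three_colour_word_iff:
  assumes "sorted_wrt (<) vs" and "u \<in> set vs" "v \<in> set vs" and "colour_lex col u v"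
    and "\<And>z. z \<in> set vs \<Longrightarrow> col z < 3"
    and "E u v \<Longrightarrow> E v u" and "E u v \<Longrightarrow> col u \<noteq> col v"
  shows "alternate_in (three_colour_word col E vs) u v \<longleftrightarrow> E u v"
proof -
  define nonedges where "nonedges = [(a, b) \<leftarrow> List.product vs vs. \<not> E a b \<and> colour_lex col a b]"
  have w: "three_colour_word col E vs
      = colour_sorted col vs @ concat (map (\<lambda>(a, b). nonedge_block col vs a b) nonedges)"
    unfolding three_colour_word_def nonedges_def ..
  have nonedges: "(a, b) \<in> set nonedges
      \<longleftrightarrow> a \<in> set vs \<and> b \<in> set vs \<and> \<not> E a b \<and> colour_lex col a b" for a b
    unfolding nonedges_def by auto
  have init: "filter (\<lambda>z. z = u \<or> z = v) (colour_sorted col vs) = [u, v]"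
    using filter_colour_sorted[OF assms(1-4) assms(5)[OF assms(3)]] .
  show ?thesis
  proof
    assume "E u v"
    then have "E v u" by (rule assms(6))
    have "col u < col v" using assms(4,7) \<open>E u v\<close> unfolding colour_lex_def by auto
    have "filter (\<lambda>z. z = u \<or> z = v) (nonedge_block col vs a b) = [u, v, u, v]"
      if "(a, b) \<in> set nonedges" for a b
    proof -
      from that have "b \<in> set vs" "\<not> E a b" "colour_lex col a b" by (simp_all add: nonedges)
      with \<open>E u v\<close> \<open>E v u\<close> show ?thesis
        using nonedge_block_edge[OF assms(1-3) \<open>col u < col v\<close> assms(5)[OF assms(3)]] assms(5)
        by blast
    qed
    then have "filter (\<lambda>z. z = u \<or> z = v) (three_colour_word col E vs)
        = [u, v] @ concat (map (\<lambda>_. [u, v, u, v]) nonedges)"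
      unfolding w filter_append filter_concat init map_map
      by (auto intro!: arg_cong[where f = concat] simp: split_def)
    moreover have "u \<noteq> v" using \<open>col u < col v\<close> by auto
    ultimately show "alternate_in (three_colour_word col E vs) u v"
      unfolding alternate_in_iff_distinct_adj using distinct_adj_pair_blocks by metis
  next
    assume "alternate_in (three_colour_word col E vs) u v"
    show "E u v"
    proof (rule ccontr)
      assume "\<not> E u v"
      then obtain xs ys where "nonedges = xs @ (u, v) # ys"
        using nonedges assms(2-4) by (metis split_list)
      then have "filter (\<lambda>z. z = u \<or> z = v) (three_colour_word col E vs)
          = filter (\<lambda>z. z = u \<or> z = v)
              (colour_sorted col vs @ concat (map (\<lambda>(a, b). nonedge_block col vs a b) xs))
            @ filter (\<lambda>z. z = u \<or> z = v) (nonedge_block col vs u v)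
            @ filter (\<lambda>z. z = u \<or> z = v) (concat (map (\<lambda>(a, b). nonedge_block col vs a b) ys))"
        unfolding w by simp
      with \<open>alternate_in (three_colour_word col E vs) u v\<close> show False
        using nonedge_block_not_alternating[OF assms(1-4) assms(5)[OF assms(3)]]
        unfolding alternate_in_iff_distinct_adj by (simp add: distinct_adj_append_iff)
    qed
  qed
qed

theorem word_representable_if_three_colourable:
  fixes V :: "'a::linorder set" and col :: "'a \<Rightarrow> nat"
  assumes "finite V"
    and sym: "\<And>u v. u \<in> V \<Longrightarrow> v \<in> V \<Longrightarrow> E u v \<Longrightarrow> E v u"
    and colours: "\<And>v. v \<in> V \<Longrightarrow> col v < 3"
    and proper: "\<And>u v. u \<in> V \<Longrightarrow> v \<in> V \<Longrightarrow> E u v \<Longrightarrow> col u \<noteq> col v"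
  shows "word_representable V E"
proof -
  define vs where "vs = sorted_list_of_set V"
  have vs: "sorted_wrt (<) vs" "set vs = V"
    unfolding vs_def using \<open>finite V\<close> by auto
  define w where "w = three_colour_word col E vs"
  have lex: "E u v \<longleftrightarrow> alternate_in w u v" if "u \<in> V" "v \<in> V" "colour_lex col u v" for u v
    unfolding w_def
  proof (rule alternate_in_three_colour_word_iff[symmetric, OF vs(1)])
    show "u \<in> set vs" "v \<in> set vs" using that(1,2) vs(2) by simp_all
    show "colour_lex col u v" by (rule that(3))
    show "col z < 3" if "z \<in> set vs" for z using colours that vs(2) by simp
    show "E u v \<Longrightarrow> E v u" by (rule sym[OF that(1,2)])
    show "E u v \<Longrightarrow> col u \<noteq> col v" by (rule proper[OF that(1,2)])
  qed
  have "set w = set vs"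
    unfolding w_def by (rule set_three_colour_word) (use colours vs(2) in simp)
  show ?thesis
    unfolding word_representable_def
  proof (intro exI conjI ballI impI)
    show "set w = V" using \<open>set w = set vs\<close> vs(2) by simp
    fix u v assume "u \<in> V" "v \<in> V" "u \<noteq> v"
    then consider "colour_lex col u v" | "colour_lex col v u"
      unfolding colour_lex_def by (metis less_linear)
    then show "E u v \<longleftrightarrow> alternate_in w u v"
    proof cases
      case 1
      with lex \<open>u \<in> V\<close> \<open>v \<in> V\<close> show ?thesis by blast
    next
      case 2
      have "E u v \<longleftrightarrow> E v u" using sym \<open>u \<in> V\<close> \<open>v \<in> V\<close> by blast
      also have "\<dots> \<longleftrightarrow> alternate_in w v u" by (rule lex[OF \<open>v \<in> V\<close> \<open>u \<in> V\<close> 2])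
      also have "\<dots> \<longleftrightarrow> alternate_in w u v" by (rule alternate_in_commute)
      finally show ?thesis .
    qed
  qed
qed

definition block_colour :: "nat \<Rightarrow> nat \<Rightarrow> nat" where
  "block_colour m i = (i + i div m) mod 3"

lemma block_colour_less: "block_colour m i < 3"
  unfolding block_colour_def by simp

lemma block_colour_add_neq:
  assumes "(d + d div m) mod 3 = 1"
  shows "block_colour m (i + d) \<noteq> block_colour m i"
proof -
  define carry where "carry = (i mod m + d mod m) div m"
  have "carry < 2"
  proof (cases "m = 0")
    case False
    then have "i mod m < m" "d mod m < m" by simp_all
    then have "i mod m + d mod m < 2 * m" by linarith
    then show ?thesis unfolding carry_def by (rule less_mult_imp_div_less)
  qed (simp add: carry_def)
  have sum: "i + d + (i + d) div m = (i + i div m) + (d + d div m) + carry"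
    using div_add1_eq[of i d m] unfolding carry_def by simp
  have shift: "(a + b + c) mod 3 \<noteq> a mod 3" if "b mod 3 = 1" "c < 2" for a b c :: nat
    using that by presburger
  show ?thesis
    unfolding block_colour_def sum by (rule shift[OF assms \<open>carry < 2\<close>])
qed

lemma circulant_adj_commute: "circulant_adj m R i j \<longleftrightarrow> circulant_adj m R j i"
  unfolding circulant_adj_def Let_def by auto

lemma circulant_adj_irrefl: "0 \<notin> R \<Longrightarrow> \<not> circulant_adj m R i i"
  unfolding circulant_adj_def by simp

lemma circulant_adj_distance:
  assumes "circulant_adj m R i j" and "i < j"
  shows "j - i \<in> R \<or> m - (j - i) \<in> R"
  using assms unfolding circulant_adj_def Let_def by (auto simp: min_def split: if_splits)

lemma circulant_jump_residue:
  fixes n x t d :: nat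
  assumes "n = 3 * t" "1 < x" "x mod 3 = 1" "2 * x < n"
    and "d \<in> {1, x, n, 2 * n - 1, 2 * n - x}"
  shows "(d + d div (2 * t)) mod 3 = 1"
proof -
  have "x < 2 * t" using assms(1,4) by linarith
  from assms(5) consider "d = 1" | "d = x" | "d = n" | "d = 2 * n - 1" | "d = 2 * n - x"
    by blast
  then show ?thesis
  proof cases
    case 1
    with \<open>x < 2 * t\<close> assms(2) show ?thesis by simp
  next
    case 2
    with \<open>x < 2 * t\<close> assms(3) show ?thesis by simp
  next
    case 3
    then have "d div (2 * t) = 1" using assms(1) \<open>x < 2 * t\<close> by (intro div_nat_eqI) simp_all
    with 3 assms(1) show ?thesis by simp
  next
    case 4
    then have "d div (2 * t) = 2" using assms(1) \<open>x < 2 * t\<close> by (intro div_nat_eqI) simp_all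
    with 4 assms(1) \<open>x < 2 * t\<close> have sum: "d + d div (2 * t) = 6 * t + 1" by simp
    show ?thesis unfolding sum by presburger
  next
    case 5
    then have "d div (2 * t) = 2" using assms(1,2) \<open>x < 2 * t\<close> by (intro div_nat_eqI) simp_all
    obtain q where "x = 3 * q + 1" using assms(3) by (metis div_mod_decomp mult.commute)
    with 5 assms(1) \<open>x < 2 * t\<close> \<open>d div (2 * t) = 2\<close>
    have sum: "d + d div (2 * t) = 3 * (2 * t - q) + 1" by simp
    show ?thesis unfolding sum by simp
  qed
qed

lemma circulant_block_colouring:
  fixes n x t :: nat
  assumes "n = 3 * t" "1 < x" "x mod 3 = 1" "2 * x < n"
    and adj: "circulant_adj (2 * n) {1, x, n} i j"
  shows "block_colour (2 * t) i \<noteq> block_colour (2 * t) j"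
proof -
  have "block_colour (2 * t) i \<noteq> block_colour (2 * t) j"
    if "circulant_adj (2 * n) {1, x, n} i j" "i < j" for i j
  proof -
    have "j < 2 * n" using that(1) unfolding circulant_adj_def by simp
    with circulant_adj_distance[OF that] have "j - i \<in> {1, x, n, 2 * n - 1, 2 * n - x}"
      by auto
    from circulant_jump_residue[OF assms(1-4) this]
    have "block_colour (2 * t) (i + (j - i)) \<noteq> block_colour (2 * t) i"
      by (rule block_colour_add_neq)
    with \<open>i < j\<close> show ?thesis by simp
  qed
  moreover have "i \<noteq> j" using adj circulant_adj_irrefl assms(2,4) by force
  ultimately show ?thesis using adj circulant_adj_commute by (metis linorder_neqE_nat)
qed

theorem theorem23:
  fixes n x :: nat
  assumes "1 < x" and "x < n"
    and "n mod 3 = 0" and "x mod 3 = 1"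
    and "2 * x < n"
  shows "word_representable (circulant_vertices (2 * n)) (circulant_adj (2 * n) {1, x, n})"
proof -
  obtain t where t: "n = 3 * t" using \<open>n mod 3 = 0\<close> by auto
  show ?thesis
    unfolding circulant_vertices_def
  proof (rule word_representable_if_three_colourable[where col = "block_colour (2 * t)"])
    show "circulant_adj (2 * n) {1, x, n} j i" if "circulant_adj (2 * n) {1, x, n} i j" for i j
      using that circulant_adj_commute by metis
    show "block_colour (2 * t) i \<noteq> block_colour (2 * t) j"
      if "circulant_adj (2 * n) {1, x, n} i j" for i j
      using circulant_block_colouring[OF t assms(1,4,5) that] .
  qed (simp_all add: block_colour_less)
qed

end
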